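(* $\mathfrak{L}(\mathbb{Q}^+) \subsetneq \mathfrak{L}(SL(2,\mathbb{Q}))$.
   Context: For a group $G$ with identity $e$, a $G$-automaton is a tuple $(Q,\Sigma,G,\delta,q_0,Q_a)$ where $Q$ is a finite set of states, $\Sigma$ a finite input alphabet, $q_0\in Q$ the initial state, $Q_a\subseteq Q$ the accepting states, and $\delta$ assigns to each $(q,\sigma)\in Q\times(\Sigma\cup\{\varepsilon\})$ a finite set of pairs $(q',m)\in Q\times G$. The register holds an element of $G$, initially $e$; using a transition $(q',m)\in\delta(q,\sigma)$ the automaton reads $\sigma$ (or nothing), moves to $q'$ and replaces the register content $x$ by $xm$. A word is accepted if some computation reads it entirely and ends in an accepting state with register equal to $e$. $\mathfrak{L}(G)$ is the class of languages recognized by $G$-automata. $\mathbb{Q}^+$ is the multiplicative group of positive rationals; $SL(2,\mathbb{Q})$ is the group of $2\times2$ rational matrices of determinant $1$. *)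

theory Defs
  imports "HOL-Algebra.Group" "HOL-Analysis.Determinants"
begin

text \<open>States are natural numbers (any finite state
set can be renamed into nat). A transition label is an input symbol
(Some a) or the empty word (None).\<close>

inductive gruns :: "('g, 'b) monoid_scheme \<Rightarrow> (nat \<Rightarrow> 'a option \<Rightarrow> (nat \<times> 'g) set)
    \<Rightarrow> nat \<Rightarrow> 'g \<Rightarrow> 'a list \<Rightarrow> nat \<Rightarrow> 'g \<Rightarrow> bool"
  for G delta where
  stop: "gruns G delta q x [] q x"
| eps: "(q', m) \<in> delta q None \<Longrightarrow> gruns G delta q' (x \<otimes>\<^bsub>G\<^esub> m) w q'' y
          \<Longrightarrow> gruns G delta q x w q'' y"
| read: "(q', m) \<in> delta q (Some a) \<Longrightarrow> gruns G delta q' (x \<otimes>\<^bsub>G\<^esub> m) w q'' y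
          \<Longrightarrow> gruns G delta q x (a # w) q'' y"

definition g_automaton :: "('g, 'b) monoid_scheme \<Rightarrow> nat set \<Rightarrow> 'a set
    \<Rightarrow> (nat \<Rightarrow> 'a option \<Rightarrow> (nat \<times> 'g) set) \<Rightarrow> nat \<Rightarrow> nat set \<Rightarrow> bool" where
  "g_automaton G Q Sig delta q0 Qa \<longleftrightarrow>
     finite Q \<and> finite Sig \<and> q0 \<in> Q \<and> Qa \<subseteq> Q \<and>
     (\<forall>q \<in> Q. \<forall>s \<in> {None} \<union> Some ` Sig.
         finite (delta q s) \<and> delta q s \<subseteq> Q \<times> carrier G) \<and>
     (\<forall>q s. q \<notin> Q \<or> s \<notin> {None} \<union> Some ` Sig \<longrightarrow> delta q s = {})"

definition g_accepted :: "('g, 'b) monoid_scheme \<Rightarrow> 'a set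
    \<Rightarrow> (nat \<Rightarrow> 'a option \<Rightarrow> (nat \<times> 'g) set) \<Rightarrow> nat \<Rightarrow> nat set \<Rightarrow> 'a list set" where
  "g_accepted G Sig delta q0 Qa =
     {w \<in> lists Sig. \<exists>qf \<in> Qa. gruns G delta q0 \<one>\<^bsub>G\<^esub> w qf \<one>\<^bsub>G\<^esub>}"

definition gLang :: "('g, 'b) monoid_scheme \<Rightarrow> 'a set \<Rightarrow> 'a list set set" where
  "gLang G Sig = {L. \<exists>Q delta q0 Qa. g_automaton G Q Sig delta q0 Qa \<and>
                        L = g_accepted G Sig delta q0 Qa}"

definition Qpos :: "rat monoid" where
  "Qpos = \<lparr>carrier = {q. 0 < q}, monoid.mult = (*), monoid.one = 1\<rparr>"

definition SL2Q :: "(rat^2^2) monoid" where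
  "SL2Q = \<lparr>carrier = {A. det A = 1}, monoid.mult = (**), monoid.one = mat 1\<rparr>"

end

theory Submission
  imports Defs
begin

(* The embedding m \<mapsto> diag(m, 1/m) of Q+ into SL(2,Q) turns every Q+-automaton into an
   SL(2,Q)-automaton with the same runs, which gives the inclusion.  For strictness consider the
   marked palindromes u 2 rev(u) over {0,1}.  The matrices [[1,1],[0,1]] and [[1,0],[1,1]] generate
   a free monoid, so an automaton that multiplies by these generators before the marker and by their
   inverses after it returns to the identity exactly on marked palindromes.  Over a commutative
   monoid no automaton accepts them: in a long accepted word made of pairwise distinct blocks, some
   state recurs at three block boundaries, and the two loops between them can be exchanged without
   changing the register, which yields an accepted word whose prefix is no longer the reverse of its
   suffix. *)

section \<open>Runs of G-automata\<close>

lemma gruns_append: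
  "gruns G \<delta> q x u p z \<Longrightarrow> gruns G \<delta> p z v q' y \<Longrightarrow> gruns G \<delta> q x (u @ v) q' y"
  by (induction rule: gruns.induct) (auto intro: gruns.intros)

lemma gruns_split_append:
  "gruns G \<delta> q x (u @ v) q' y \<Longrightarrow> \<exists>p z. gruns G \<delta> q x u p z \<and> gruns G \<delta> p z v q' y"
proof (induction "u @ v" q' y arbitrary: u rule: gruns.induct)
  case (stop q x)
  then show ?case by (auto intro: gruns.stop)
next
  case (eps q1 m q x q'' y)
  then show ?case by (blast intro: gruns.eps)
next
  case (read q1 m q a x w q'' y)
  then show ?case
    by (cases u) (auto intro: gruns.intros)
qed

lemma gruns_Nil_iff_eps_free:
  assumes "\<And>q. \<delta> q None = {}"
  shows "gruns G \<delta> q x [] q' y \<longleftrightarrow> q' = q \<and> y = x"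
  using assms by (auto elim: gruns.cases intro: gruns.stop)

lemma gruns_Cons_iff_eps_free:
  assumes "\<And>q. \<delta> q None = {}"
  shows "gruns G \<delta> q x (a # w) q' y \<longleftrightarrow> (\<exists>(p, m) \<in> \<delta> q (Some a). gruns G \<delta> p (x \<otimes>\<^bsub>G\<^esub> m) w q' y)"
proof
  assume "gruns G \<delta> q x (a # w) q' y"
  then show "\<exists>(p, m) \<in> \<delta> q (Some a). gruns G \<delta> p (x \<otimes>\<^bsub>G\<^esub> m) w q' y"
    using assms by (cases rule: gruns.cases) auto
qed (auto intro: gruns.read)

locale monoid_automaton = monoid G for G (structure) +
  fixes Q :: "nat set" and Sig :: "'a set" and \<delta> :: "nat \<Rightarrow> 'a option \<Rightarrow> (nat \<times> 'g) set"
    and q0 :: nat and Qa :: "nat set"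
  assumes automaton: "g_automaton G Q Sig \<delta> q0 Qa"
begin

lemma transitionD: "(q', m) \<in> \<delta> q s \<Longrightarrow> q \<in> Q \<and> q' \<in> Q \<and> m \<in> carrier G"
  using automaton unfolding g_automaton_def by blast

lemma gruns_state_in_Q: "gruns G \<delta> q x w q' y \<Longrightarrow> q \<in> Q \<Longrightarrow> q' \<in> Q"
  by (induction rule: gruns.induct) (auto dest: transitionD)

lemma gruns_register_closed: "gruns G \<delta> q x w q' y \<Longrightarrow> x \<in> carrier G \<Longrightarrow> y \<in> carrier G"
  by (induction rule: gruns.induct) (auto dest: transitionD)

lemma gruns_mult_left:
  "gruns G \<delta> q z w q' y \<Longrightarrow> z \<in> carrier G \<Longrightarrow> x \<in> carrier G \<Longrightarrow>
   gruns G \<delta> q (x \<otimes> z) w q' (x \<otimes> y)"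
proof (induction rule: gruns.induct)
  case (stop q z)
  show ?case by (rule gruns.stop)
next
  case (eps q1 m q z w q'' y)
  then show ?case using transitionD[OF eps(1)] by (auto simp: m_assoc intro: gruns.eps)
next
  case (read q1 m q a z w q'' y)
  then show ?case using transitionD[OF read(1)] by (auto simp: m_assoc intro: gruns.read)
qed

lemma gruns_factor:
  "gruns G \<delta> q x w q' y \<Longrightarrow> x \<in> carrier G \<Longrightarrow>
   \<exists>g \<in> carrier G. y = x \<otimes> g \<and> gruns G \<delta> q \<one> w q' g"
proof (induction rule: gruns.induct)
  case (stop q x)
  then show ?case by (intro bexI[of _ \<one>]) (auto intro: gruns.stop)
next
  case (eps q1 m q x w q'' y)
  have m: "m \<in> carrier G" using transitionD[OF eps(1)] by blast
  then obtain g where g: "g \<in> carrier G" "y = x \<otimes> m \<otimes> g" "gruns G \<delta> q1 \<one> w q'' g"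
    using eps by auto
  have "gruns G \<delta> q1 (m \<otimes> \<one>) w q'' (m \<otimes> g)" by (rule gruns_mult_left[OF g(3) one_closed m])
  then have "gruns G \<delta> q \<one> w q'' (m \<otimes> g)" using eps(1) m by (auto intro: gruns.eps)
  then show ?case using g m eps.prems by (auto simp: m_assoc)
next
  case (read q1 m q a x w q'' y)
  have m: "m \<in> carrier G" using transitionD[OF read(1)] by blast
  then obtain g where g: "g \<in> carrier G" "y = x \<otimes> m \<otimes> g" "gruns G \<delta> q1 \<one> w q'' g"
    using read by auto
  have "gruns G \<delta> q1 (m \<otimes> \<one>) w q'' (m \<otimes> g)" by (rule gruns_mult_left[OF g(3) one_closed m])
  then have "gruns G \<delta> q \<one> (a # w) q'' (m \<otimes> g)" using read(1) m by (auto intro: gruns.read)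
  then show ?case using g m read.prems by (auto simp: m_assoc)
qed

end

section \<open>Embeddings of monoids\<close>

definition relabel :: "('g \<Rightarrow> 'h) \<Rightarrow> (nat \<Rightarrow> 'a option \<Rightarrow> (nat \<times> 'g) set)
    \<Rightarrow> nat \<Rightarrow> 'a option \<Rightarrow> (nat \<times> 'h) set" where
  "relabel h \<delta> q s = apsnd h ` \<delta> q s"

lemma g_automaton_relabel:
  assumes "g_automaton G Q Sig \<delta> q0 Qa" "h \<in> carrier G \<rightarrow> carrier H"
  shows "g_automaton H Q Sig (relabel h \<delta>) q0 Qa"
proof -
  have "apsnd h ` S \<subseteq> Q \<times> carrier H" if "S \<subseteq> Q \<times> carrier G" for S
    using that assms(2) by (auto simp: apsnd_def map_prod_def)
  with assms(1) show ?thesis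
    unfolding g_automaton_def relabel_def by (simp add: Ball_def)
qed

context monoid_automaton
begin

lemma gruns_relabel:
  assumes "h \<in> hom G H"
  shows "gruns G \<delta> q x w q' y \<Longrightarrow> x \<in> carrier G \<Longrightarrow> gruns H (relabel h \<delta>) q (h x) w q' (h y)"
proof (induction rule: gruns.induct)
  case (stop q x)
  show ?case by (rule gruns.stop)
next
  case (eps q1 m q x w q'' y)
  have m: "m \<in> carrier G" using transitionD[OF eps(1)] by blast
  have "(q1, h m) \<in> relabel h \<delta> q None" using eps(1) unfolding relabel_def by force
  moreover have "gruns H (relabel h \<delta>) q1 (h x \<otimes>\<^bsub>H\<^esub> h m) w q'' (h y)"
    using eps.IH eps.prems m hom_mult[OF assms] by simp
  ultimately show ?case by (rule gruns.eps)
next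
  case (read q1 m q a x w q'' y)
  have m: "m \<in> carrier G" using transitionD[OF read(1)] by blast
  have "(q1, h m) \<in> relabel h \<delta> q (Some a)" using read(1) unfolding relabel_def by force
  moreover have "gruns H (relabel h \<delta>) q1 (h x \<otimes>\<^bsub>H\<^esub> h m) w q'' (h y)"
    using read.IH read.prems m hom_mult[OF assms] by simp
  ultimately show ?case by (rule gruns.read)
qed

lemma gruns_relabelD:
  assumes "h \<in> hom G H"
  shows "gruns H (relabel h \<delta>) q X w q' Y \<Longrightarrow> X = h x \<Longrightarrow> x \<in> carrier G \<Longrightarrow>
    \<exists>y \<in> carrier G. Y = h y \<and> gruns G \<delta> q x w q' y"
proof (induction arbitrary: x rule: gruns.induct)
  case (stop q X)
  then show ?case by (auto intro: gruns.stop)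
next
  case (eps q1 M q X w q'' Y)
  then obtain m where m: "(q1, m) \<in> \<delta> q None" "M = h m"
    unfolding relabel_def by auto
  have "m \<in> carrier G" using transitionD[OF m(1)] by blast
  then have "X \<otimes>\<^bsub>H\<^esub> M = h (x \<otimes> m)"
    using eps.prems m(2) hom_mult[OF assms] by simp
  then obtain y where "y \<in> carrier G" "Y = h y" and run: "gruns G \<delta> q1 (x \<otimes> m) w q'' y"
    using eps.IH eps.prems \<open>m \<in> carrier G\<close> by blast
  then show ?case using gruns.eps[where delta = \<delta>, OF m(1) run] by blast
next
  case (read q1 M q a X w q'' Y)
  then obtain m where m: "(q1, m) \<in> \<delta> q (Some a)" "M = h m"
    unfolding relabel_def by auto
  have "m \<in> carrier G" using transitionD[OF m(1)] by blast
  then have "X \<otimes>\<^bsub>H\<^esub> M = h (x \<otimes> m)"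
    using read.prems m(2) hom_mult[OF assms] by simp
  then obtain y where "y \<in> carrier G" "Y = h y" and run: "gruns G \<delta> q1 (x \<otimes> m) w q'' y"
    using read.IH read.prems \<open>m \<in> carrier G\<close> by blast
  then show ?case using gruns.read[where delta = \<delta>, OF m(1) run] by blast
qed

lemma g_accepted_relabel:
  assumes "h \<in> mon G H" "h \<one> = \<one>\<^bsub>H\<^esub>"
  shows "g_accepted H Sig (relabel h \<delta>) q0 Qa = g_accepted G Sig \<delta> q0 Qa"
proof -
  have hom: "h \<in> hom G H" and inj: "inj_on h (carrier G)"
    using assms(1) unfolding mon_def by blast+
  have "gruns H (relabel h \<delta>) q0 \<one>\<^bsub>H\<^esub> w qf \<one>\<^bsub>H\<^esub> \<longleftrightarrow> gruns G \<delta> q0 \<one> w qf \<one>" for w qf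
  proof
    assume "gruns H (relabel h \<delta>) q0 \<one>\<^bsub>H\<^esub> w qf \<one>\<^bsub>H\<^esub>"
    from gruns_relabelD[OF hom this assms(2)[symmetric] one_closed]
    obtain y where "y \<in> carrier G" "\<one>\<^bsub>H\<^esub> = h y" "gruns G \<delta> q0 \<one> w qf y"
      by blast
    moreover have "y = \<one>"
      using inj_onD[OF inj, of \<one> y] assms(2) \<open>\<one>\<^bsub>H\<^esub> = h y\<close> \<open>y \<in> carrier G\<close> by simp
    ultimately show "gruns G \<delta> q0 \<one> w qf \<one>" by simp
  next
    assume "gruns G \<delta> q0 \<one> w qf \<one>"
    from gruns_relabel[OF hom this one_closed]
    show "gruns H (relabel h \<delta>) q0 \<one>\<^bsub>H\<^esub> w qf \<one>\<^bsub>H\<^esub>"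
      using assms(2) by simp
  qed
  then show ?thesis unfolding g_accepted_def by simp
qed

end

lemma gLang_subset_if_mon:
  assumes "monoid G" "h \<in> mon G H" "h \<one>\<^bsub>G\<^esub> = \<one>\<^bsub>H\<^esub>"
  shows "gLang G Sig \<subseteq> gLang H Sig"
proof
  fix L assume "L \<in> gLang G Sig"
  then obtain Q \<delta> q0 Qa where aut: "g_automaton G Q Sig \<delta> q0 Qa"
    and L: "L = g_accepted G Sig \<delta> q0 Qa"
    unfolding gLang_def by blast
  interpret monoid_automaton G Q Sig \<delta> q0 Qa
    using assms(1) aut by (simp add: monoid_automaton_def monoid_automaton_axioms_def)
  have "g_automaton H Q Sig (relabel h \<delta>) q0 Qa"
    using g_automaton_relabel[OF aut] assms(2) unfolding mon_def hom_def by blast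
  then show "L \<in> gLang H Sig"
    unfolding gLang_def L using g_accepted_relabel[OF assms(2,3)] by blast
qed

section \<open>Marked palindromes and commutative monoids\<close>

definition blocks :: "(nat \<Rightarrow> 'a list) \<Rightarrow> nat \<Rightarrow> nat \<Rightarrow> 'a list" where
  "blocks f i j = concat (map f [i..<j])"

lemma blocks_empty [simp]: "blocks f i i = []"
  by (simp add: blocks_def)

lemma blocks_append: "i \<le> j \<Longrightarrow> j \<le> k \<Longrightarrow> blocks f i j @ blocks f j k = blocks f i k"
  unfolding blocks_def by (metis concat_append le_Suc_ex map_append upt_add_eq_append)

lemma blocks_Suc: "i \<le> j \<Longrightarrow> blocks f i (Suc j) = blocks f i j @ f j"
  by (simp add: blocks_def)

lemma blocks_Cons: "i < j \<Longrightarrow> blocks f i j = f i @ blocks f (Suc i) j"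
  by (simp add: blocks_def upt_conv_Cons)

lemma gruns_blocks_configurations:
  "gruns G \<delta> q x (blocks f 0 n @ w) q' y \<Longrightarrow>
   \<exists>qs xs. qs 0 = q \<and> xs 0 = x \<and>
     (\<forall>i j. i \<le> j \<and> j \<le> n \<longrightarrow> gruns G \<delta> (qs i) (xs i) (blocks f i j) (qs j) (xs j)) \<and>
     gruns G \<delta> (qs n) (xs n) w q' y"
proof (induction n arbitrary: w)
  case 0
  then show ?case by (intro exI[of _ "\<lambda>_. q"] exI[of _ "\<lambda>_. x"]) (auto intro: gruns.stop)
next
  case (Suc n)
  have "gruns G \<delta> q x (blocks f 0 n @ f n @ w) q' y"
    using Suc.prems by (simp add: blocks_Suc)
  from Suc.IH[OF this] obtain qs xs where qs: "qs 0 = q" "xs 0 = x"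
      "\<forall>i j. i \<le> j \<and> j \<le> n \<longrightarrow> gruns G \<delta> (qs i) (xs i) (blocks f i j) (qs j) (xs j)"
    and last: "gruns G \<delta> (qs n) (xs n) (f n @ w) q' y"
    by blast
  from gruns_split_append[OF last] obtain p z
    where step: "gruns G \<delta> (qs n) (xs n) (f n) p z" and rest: "gruns G \<delta> p z w q' y"
    by blast
  let ?qs = "qs(Suc n := p)" and ?xs = "xs(Suc n := z)"
  have "gruns G \<delta> (?qs i) (?xs i) (blocks f i j) (?qs j) (?xs j)" if "i \<le> j" "j \<le> Suc n" for i j
  proof (cases "j = Suc n")
    case False
    then show ?thesis using qs(3)[rule_format, of i j] that by simp
  next
    case True
    show ?thesis
    proof (cases "i = Suc n")
      case False
      then have "i \<le> n" using that True by simp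
      then have "gruns G \<delta> (qs i) (xs i) (blocks f i n @ f n) p z"
        using gruns_append[OF qs(3)[rule_format, of i n] step] by simp
      then show ?thesis using True False \<open>i \<le> n\<close> by (simp add: blocks_Suc)
    qed (use True in \<open>simp add: gruns.stop\<close>)
  qed
  then show ?case using qs rest by (intro exI[of _ ?qs] exI[of _ ?xs]) simp
qed

lemma three_elements_ordered:
  fixes S :: "'a :: linorder set"
  assumes "finite S" "2 < card S"
  shows "\<exists>i j k. i < j \<and> j < k \<and> i \<in> S \<and> j \<in> S \<and> k \<in> S"
proof -
  define xs where "xs = sorted_list_of_set S"
  have xs: "sorted_wrt (<) xs" "set xs = S" "length xs = card S"
    using assms(1) by (simp_all add: xs_def)
  then have "xs ! 0 < xs ! 1" "xs ! 1 < xs ! 2"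
    using assms(2) by (simp_all add: sorted_wrt_nth_less)
  moreover have "xs ! 0 \<in> set xs" "xs ! 1 \<in> set xs" "xs ! 2 \<in> set xs"
    using xs(3) assms(2) by (auto intro!: nth_mem)
  ultimately show ?thesis using xs(2) by blast
qed

lemma pigeonhole_three:
  assumes "finite Q" "f ` {..n} \<subseteq> Q" "2 * card Q \<le> n"
  shows "\<exists>i j k. i < j \<and> j < k \<and> k \<le> n \<and> f i = f j \<and> f j = f k"
proof -
  have "Q \<noteq> {}" using assms(2) by blast
  then have "0 < card Q" using assms(1) by (simp add: card_gt_0_iff)
  from \<open>Q \<noteq> {}\<close> obtain p where p: "card {..n} \<le> card (f -` {p} \<inter> {..n}) * card Q"
    using pigeonhole_card[of f "{..n}" Q] assms(1,2) by blast
  have "2 < card (f -` {p} \<inter> {..n})"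
  proof (rule ccontr)
    assume "\<not> ?thesis"
    then have "card (f -` {p} \<inter> {..n}) * card Q \<le> 2 * card Q" by (simp add: mult_right_mono)
    then show False using p assms(3) card_atMost[of n] by linarith
  qed
  then obtain i j k where ijk: "i < j" "j < k" and "i \<in> f -` {p} \<inter> {..n}"
      "j \<in> f -` {p} \<inter> {..n}" "k \<in> f -` {p} \<inter> {..n}"
    using three_elements_ordered[of "f -` {p} \<inter> {..n}"] by blast
  then have "f i = p" "f j = p" "f k = p" "k \<le> n" by auto
  then show ?thesis using ijk by (intro exI[of _ i] exI[of _ j] exI[of _ k]) simp
qed

locale comm_monoid_automaton = monoid_automaton + comm_monoid G
begin

lemma gruns_swap_loops:
  assumes u: "gruns G \<delta> p x u p y" and v: "gruns G \<delta> p y v p z" and x: "x \<in> carrier G"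
  shows "gruns G \<delta> p x (v @ u) p z"
proof -
  obtain b where b: "b \<in> carrier G" "y = x \<otimes> b" "gruns G \<delta> p \<one> u p b"
    using gruns_factor[OF u x] by blast
  obtain c where c: "c \<in> carrier G" "z = y \<otimes> c" "gruns G \<delta> p \<one> v p c"
    using gruns_factor[OF v] b x by auto
  have "x \<otimes> c \<otimes> b = z"
    using b c x by (simp add: m_ac)
  then have "gruns G \<delta> p (x \<otimes> c) u p z"
    using gruns_mult_left[OF b(3) one_closed, of "x \<otimes> c"] x c(1) by simp
  moreover have "gruns G \<delta> p x v p (x \<otimes> c)"
    using gruns_mult_left[OF c(3) one_closed x] x by simp
  ultimately show ?thesis by (simp add: gruns_append)
qed

lemma accepted_blocks_swap:
  assumes "blocks f 0 n @ w \<in> g_accepted G Sig \<delta> q0 Qa" and "2 * card Q \<le> n"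
  shows "\<exists>i j k. i < j \<and> j < k \<and> k \<le> n \<and>
           blocks f 0 i @ blocks f j k @ blocks f i j @ blocks f k n @ w \<in> g_accepted G Sig \<delta> q0 Qa"
proof -
  obtain qf where qf: "qf \<in> Qa" "gruns G \<delta> q0 \<one> (blocks f 0 n @ w) qf \<one>"
    and word: "blocks f 0 n @ w \<in> lists Sig"
    using assms(1) unfolding g_accepted_def by blast
  obtain qs xs where qs: "qs 0 = q0" "xs 0 = \<one>"
      "\<forall>i j. i \<le> j \<and> j \<le> n \<longrightarrow> gruns G \<delta> (qs i) (xs i) (blocks f i j) (qs j) (xs j)"
    and last: "gruns G \<delta> (qs n) (xs n) w qf \<one>"
    using gruns_blocks_configurations[OF qf(2)] by blast
  have run: "gruns G \<delta> (qs a) (xs a) (blocks f a b) (qs b) (xs b)" if "a \<le> b" "b \<le> n" for a b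
    using qs(3) that by blast
  have "q0 \<in> Q" "finite Q" using automaton unfolding g_automaton_def by auto
  then have "qs ` {..n} \<subseteq> Q"
    using gruns_state_in_Q[OF run[of 0]] qs(1) by auto
  then obtain i j k where ijk: "i < j" "j < k" "k \<le> n" "qs j = qs i" "qs k = qs i"
    using pigeonhole_three[OF \<open>finite Q\<close> _ assms(2)] by metis
  have prefix: "gruns G \<delta> q0 \<one> (blocks f 0 i) (qs i) (xs i)"
    using run[of 0 i] qs ijk by simp
  have u: "gruns G \<delta> (qs i) (xs i) (blocks f i j) (qs i) (xs j)"
    using run[of i j] ijk by simp
  have v: "gruns G \<delta> (qs i) (xs j) (blocks f j k) (qs i) (xs k)"
    using run[of j k] ijk by simp
  have suffix: "gruns G \<delta> (qs i) (xs k) (blocks f k n @ w) qf \<one>"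
    using gruns_append[OF run[of k n] last] ijk by simp
  have "xs i \<in> carrier G"
    using gruns_register_closed[OF prefix] by simp
  then have "gruns G \<delta> (qs i) (xs i) (blocks f j k @ blocks f i j) (qs i) (xs k)"
    by (rule gruns_swap_loops[OF u v])
  from gruns_append[OF prefix gruns_append[OF this suffix]]
  have "gruns G \<delta> q0 \<one> (blocks f 0 i @ blocks f j k @ blocks f i j @ blocks f k n @ w) qf \<one>"
    by simp
  moreover have "blocks f 0 n = blocks f 0 i @ blocks f i j @ blocks f j k @ blocks f k n"
    using ijk by (simp add: blocks_append)
  then have "blocks f 0 i @ blocks f j k @ blocks f i j @ blocks f k n @ w \<in> lists Sig"
    using word by simp
  ultimately show ?thesis
    using ijk qf(1) unfolding g_accepted_def by blast
qed

end

definition marked_palindromes :: "nat list set" where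
  "marked_palindromes = {u @ 2 # rev u | u. u \<in> lists {0, 1}}"

definition block :: "nat \<Rightarrow> nat list" where
  "block t = 0 # replicate (Suc t) 1"

lemma blocks_block_in_lists: "blocks block i j \<in> lists {0, 1}"
  unfolding blocks_def block_def lists_eq_set by (auto simp: set_replicate_conv_if)

lemma blocks_block_swap_neq:
  assumes "i < j" "j < k"
  shows "blocks block i j @ blocks block j k \<noteq> blocks block j k @ blocks block i j"
proof -
  have "blocks block i j @ blocks block j k = blocks block i k"
    using assms by (simp add: blocks_append)
  also have "\<dots> = block i @ block (Suc i) @ blocks block (Suc (Suc i)) k"
    using assms blocks_Cons[of i k block] blocks_Cons[of "Suc i" k block] by simp
  finally have "(blocks block i j @ blocks block j k) ! (i + 2) = 0"
    by (simp add: block_def nth_append)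
  moreover have "(blocks block j k @ blocks block i j) ! (i + 2) = 1"
    using assms by (simp add: blocks_Cons block_def nth_append)
  ultimately show ?thesis by auto
qed

lemma marked_palindromes_notin_comm_gLang:
  assumes "comm_monoid G"
  shows "marked_palindromes \<notin> gLang G {0, 1, 2}"
proof
  assume "marked_palindromes \<in> gLang G {0, 1, 2}"
  then obtain Q \<delta> q0 Qa where aut: "g_automaton G Q {0, 1, 2} \<delta> q0 Qa"
    and L: "marked_palindromes = g_accepted G {0, 1, 2} \<delta> q0 Qa"
    unfolding gLang_def by blast
  interpret comm_monoid_automaton G Q "{0, 1, 2}" \<delta> q0 Qa
    using assms aut
    by (simp add: comm_monoid_automaton_def monoid_automaton_def monoid_automaton_axioms_def
        comm_monoid.axioms(1))
  define n where "n = 2 * card Q"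
  define W where "W = blocks block 0 n"
  have "W @ 2 # rev W \<in> marked_palindromes"
    unfolding marked_palindromes_def W_def using blocks_block_in_lists by blast
  then obtain i j k where ijk: "i < j" "j < k" "k \<le> n"
    and "(blocks block 0 i @ blocks block j k @ blocks block i j @ blocks block k n) @ 2 # rev W
           \<in> marked_palindromes"
    using accepted_blocks_swap[of block n "2 # rev W"] L unfolding W_def n_def by auto
  moreover define W' where "W' = blocks block 0 i @ blocks block j k @ blocks block i j @ blocks block k n"
  ultimately obtain u where u: "W' @ 2 # rev W = u @ 2 # rev u"
    unfolding marked_palindromes_def by blast
  have "2 \<notin> set W'" "2 \<notin> set (rev W)"
    using blocks_block_in_lists unfolding W_def W'_def by fastforce+
  with u have "W' = W"
    using append_Cons_eq_iff by fastforce
  also have "W = blocks block 0 i @ blocks block i j @ blocks block j k @ blocks block k n"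
    unfolding W_def using ijk by (simp add: blocks_append)
  finally show False
    using blocks_block_swap_neq[OF ijk(1,2)] unfolding W'_def by simp
qed

section \<open>Marked palindromes and free submonoids\<close>

primrec word_prod :: "('g, 'b) monoid_scheme \<Rightarrow> ('a \<Rightarrow> 'g) \<Rightarrow> 'a list \<Rightarrow> 'g" where
  "word_prod G f [] = \<one>\<^bsub>G\<^esub>"
| "word_prod G f (a # w) = f a \<otimes>\<^bsub>G\<^esub> word_prod G f w"

context monoid
begin

lemma word_prod_closed: "f ` set w \<subseteq> carrier G \<Longrightarrow> word_prod G f w \<in> carrier G"
  by (induction w) auto

lemma word_prod_snoc:
  "f ` set w \<subseteq> carrier G \<Longrightarrow> f a \<in> carrier G \<Longrightarrow> word_prod G f (w @ [a]) = word_prod G f w \<otimes> f a"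
  by (induction w) (auto simp: m_assoc word_prod_closed)

lemma word_prod_Units: "f ` set w \<subseteq> Units G \<Longrightarrow> word_prod G f w \<in> Units G"
  by (induction w) auto

lemma word_prod_rev_mult_inv:
  "f ` set v \<subseteq> Units G \<Longrightarrow> word_prod G f (rev v) \<otimes> word_prod G (\<lambda>a. inv (f a)) v = \<one>"
proof (induction v)
  case (Cons a v)
  let ?P = "word_prod G f (rev v)" and ?I = "word_prod G (\<lambda>a. inv (f a)) v"
  have a: "f a \<in> Units G" and v: "f ` set v \<subseteq> Units G" using Cons.prems by auto
  then have closed: "?P \<in> carrier G" "?I \<in> carrier G" "f a \<in> carrier G" "inv (f a) \<in> carrier G"
    by (auto intro!: word_prod_closed simp: image_subset_iff)
  have "word_prod G f (rev (a # v)) = ?P \<otimes> f a"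
    using word_prod_snoc[of f "rev v" a] v a by (auto simp: image_subset_iff)
  then have "word_prod G f (rev (a # v)) \<otimes> word_prod G (\<lambda>a. inv (f a)) (a # v)
      = ?P \<otimes> (f a \<otimes> inv (f a)) \<otimes> ?I"
    using closed by (simp add: m_assoc)
  also have "\<dots> = \<one>" using Cons.IH[OF v] a closed by simp
  finally show ?case .
qed simp

lemma word_prod_mult_inv_eq_one_iff:
  assumes "f ` A \<subseteq> Units G" "inj_on (word_prod G f) (lists A)" "u \<in> lists A" "v \<in> lists A"
  shows "word_prod G f u \<otimes> word_prod G (\<lambda>a. inv (f a)) v = \<one> \<longleftrightarrow> u = rev v"
proof
  have units: "f ` set v \<subseteq> Units G" "f ` set (rev v) \<subseteq> Units G"
      "(\<lambda>a. inv (f a)) ` set v \<subseteq> Units G"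
    using assms(1,4) by auto
  have closed: "word_prod G f u \<in> carrier G"
      "word_prod G f (rev v) \<in> carrier G" "word_prod G (\<lambda>a. inv (f a)) v \<in> carrier G"
    using assms units by (auto intro!: word_prod_closed simp: image_subset_iff)
  assume one: "word_prod G f u \<otimes> word_prod G (\<lambda>a. inv (f a)) v = \<one>"
  have "word_prod G (\<lambda>a. inv (f a)) v \<otimes> word_prod G f (rev v) = \<one>"
    using Units_inv_comm[OF word_prod_rev_mult_inv] word_prod_Units units by blast
  then have "word_prod G f u = word_prod G f u \<otimes> (word_prod G (\<lambda>a. inv (f a)) v \<otimes> word_prod G f (rev v))"
    using closed by simp
  also have "\<dots> = word_prod G f (rev v)"
    using one closed by (simp flip: m_assoc)
  finally have "word_prod G f u = word_prod G f (rev v)" .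
  moreover have "rev v \<in> lists A"
    using assms(4) by (simp add: in_lists_conv_set)
  ultimately show "u = rev v"
    using inj_onD[OF assms(2)] assms(3) by simp
next
  assume "u = rev v"
  moreover have "f ` set v \<subseteq> Units G"
    using assms(1,4) by (auto simp: in_lists_conv_set)
  ultimately show "word_prod G f u \<otimes> word_prod G (\<lambda>a. inv (f a)) v = \<one>"
    using word_prod_rev_mult_inv by simp
qed

end

primrec palindrome_delta :: "('g, 'b) monoid_scheme \<Rightarrow> (nat \<Rightarrow> 'g) \<Rightarrow> nat \<Rightarrow> nat option
    \<Rightarrow> (nat \<times> 'g) set" where
  "palindrome_delta G f q None = {}"
| "palindrome_delta G f q (Some a) =
     (if a \<in> {0, 1} \<and> q = 0 then {(0, f a)}
      else if a \<in> {0, 1} \<and> q = 1 then {(1, inv\<^bsub>G\<^esub> f a)}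
      else if a = 2 \<and> q = 0 then {(1, \<one>\<^bsub>G\<^esub>)}
      else {})"

lemma ex_Cons_eq_append_marker:
  "a \<noteq> c \<Longrightarrow> (\<exists>u v. a # w = u @ c # v \<and> P u v) \<longleftrightarrow> (\<exists>u v. w = u @ c # v \<and> P (a # u) v)"
  by (auto simp: Cons_eq_append_conv)

lemma ex_marker_eq_append_lists:
  "c \<notin> A \<Longrightarrow> (\<exists>u v. c # w = u @ c # v \<and> u \<in> lists A \<and> P u v) \<longleftrightarrow> P [] w"
  by (auto simp: Cons_eq_append_conv)

context monoid
begin

lemma g_automaton_palindrome_delta:
  assumes "f ` {0, 1} \<subseteq> Units G"
  shows "g_automaton G {0, 1} {0, 1, 2} (palindrome_delta G f) 0 {1}"
proof -
  have "palindrome_delta G f q s = {}" if "q \<notin> {0, 1} \<or> s \<notin> {None} \<union> Some ` {0, 1, 2}" for q s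
    using that by (cases s) auto
  with assms show ?thesis
    unfolding g_automaton_def by auto
qed

lemma palindrome_gruns_from_1:
  assumes "f ` {0, 1} \<subseteq> Units G" "x \<in> carrier G"
  shows "gruns G (palindrome_delta G f) 1 x v q' y \<longleftrightarrow>
    v \<in> lists {0, 1} \<and> q' = 1 \<and> y = x \<otimes> word_prod G (\<lambda>a. inv (f a)) v"
  using assms(2)
proof (induction v arbitrary: x)
  case Nil
  then show ?case by (simp add: gruns_Nil_iff_eps_free)
next
  case (Cons a v)
  show ?case
  proof (cases "a \<in> {0, 1}")
    case True
    then have a: "inv (f a) \<in> carrier G" using assms(1) by auto
    have v: "word_prod G (\<lambda>a. inv (f a)) v \<in> carrier G" if "v \<in> lists {0, 1}"
      using that assms(1) by (auto intro!: word_prod_closed simp: image_subset_iff)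
    have "gruns G (palindrome_delta G f) 1 x (a # v) q' y \<longleftrightarrow>
        gruns G (palindrome_delta G f) 1 (x \<otimes> inv (f a)) v q' y"
      using True by (simp add: gruns_Cons_iff_eps_free)
    also have "\<dots> \<longleftrightarrow> v \<in> lists {0, 1} \<and> q' = 1 \<and> y = x \<otimes> inv (f a) \<otimes> word_prod G (\<lambda>a. inv (f a)) v"
      using Cons a by simp
    also have "\<dots> \<longleftrightarrow> a # v \<in> lists {0, 1} \<and> q' = 1 \<and> y = x \<otimes> word_prod G (\<lambda>a. inv (f a)) (a # v)"
      using True a v Cons.prems by (cases "v \<in> lists {0, 1}") (simp_all add: m_assoc)
    finally show ?thesis .
  qed (simp add: gruns_Cons_iff_eps_free)
qed

lemma palindrome_gruns_from_0:
  assumes "f ` {0, 1} \<subseteq> Units G" "x \<in> carrier G"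
  shows "gruns G (palindrome_delta G f) 0 x w 1 y \<longleftrightarrow>
    (\<exists>u v. w = u @ 2 # v \<and> u \<in> lists {0, 1} \<and> v \<in> lists {0, 1} \<and>
       y = x \<otimes> (word_prod G f u \<otimes> word_prod G (\<lambda>a. inv (f a)) v))"
  using assms(2)
proof (induction w arbitrary: x)
  case Nil
  then show ?case by (simp add: gruns_Nil_iff_eps_free)
next
  case (Cons a w)
  have closed: "word_prod G f u \<in> carrier G" "word_prod G (\<lambda>a. inv (f a)) u \<in> carrier G"
    if "u \<in> lists {0, 1}" for u
    using that assms(1) by (auto intro!: word_prod_closed simp: image_subset_iff)
  consider "a \<in> {0, 1}" | "a = 2" | "a \<notin> {0, 1, 2}" by blast
  then show ?case
  proof cases
    case 1
    then have a: "f a \<in> carrier G" using assms(1) by auto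
    have "gruns G (palindrome_delta G f) 0 x (a # w) 1 y \<longleftrightarrow>
        gruns G (palindrome_delta G f) 0 (x \<otimes> f a) w 1 y"
      using 1 by (simp add: gruns_Cons_iff_eps_free)
    also have "\<dots> \<longleftrightarrow> (\<exists>u v. w = u @ 2 # v \<and> u \<in> lists {0, 1} \<and> v \<in> lists {0, 1} \<and>
       y = x \<otimes> f a \<otimes> (word_prod G f u \<otimes> word_prod G (\<lambda>a. inv (f a)) v))"
      using Cons a by simp
    also have "\<dots> \<longleftrightarrow> (\<exists>u v. w = u @ 2 # v \<and> a # u \<in> lists {0, 1} \<and> v \<in> lists {0, 1} \<and>
       y = x \<otimes> (word_prod G f (a # u) \<otimes> word_prod G (\<lambda>a. inv (f a)) v))"
      using 1 a closed Cons.prems by (simp add: m_assoc conj_commute cong: conj_cong)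
    also have "\<dots> \<longleftrightarrow> (\<exists>u v. a # w = u @ 2 # v \<and> u \<in> lists {0, 1} \<and> v \<in> lists {0, 1} \<and>
       y = x \<otimes> (word_prod G f u \<otimes> word_prod G (\<lambda>a. inv (f a)) v))"
      using 1 by (subst ex_Cons_eq_append_marker) auto
    finally show ?thesis .
  next
    case 2
    have "gruns G (palindrome_delta G f) 0 x (a # w) 1 y \<longleftrightarrow>
        gruns G (palindrome_delta G f) 1 x w 1 y"
      using 2 Cons.prems by (simp add: gruns_Cons_iff_eps_free)
    also have "\<dots> \<longleftrightarrow> w \<in> lists {0, 1} \<and> y = x \<otimes> (\<one> \<otimes> word_prod G (\<lambda>a. inv (f a)) w)"
      using palindrome_gruns_from_1[OF assms(1) Cons.prems] closed by (cases "w \<in> lists {0, 1}") simp_all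
    also have "\<dots> \<longleftrightarrow> (\<exists>u v. a # w = u @ 2 # v \<and> u \<in> lists {0, 1} \<and> v \<in> lists {0, 1} \<and>
       y = x \<otimes> (word_prod G f u \<otimes> word_prod G (\<lambda>a. inv (f a)) v))"
      unfolding 2 by (subst ex_marker_eq_append_lists) simp_all
    finally show ?thesis .
  next
    case 3
    have "\<not> gruns G (palindrome_delta G f) 0 x (a # w) 1 y"
      using 3 by (simp add: gruns_Cons_iff_eps_free)
    moreover have "\<not> (\<exists>u v. a # w = u @ 2 # v \<and> u \<in> lists {0, 1} \<and> v \<in> lists {0, 1} \<and>
       y = x \<otimes> (word_prod G f u \<otimes> word_prod G (\<lambda>a. inv (f a)) v))"
    proof
      assume "\<exists>u v. a # w = u @ 2 # v \<and> u \<in> lists {0, 1} \<and> v \<in> lists {0, 1} \<and>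
       y = x \<otimes> (word_prod G f u \<otimes> word_prod G (\<lambda>a. inv (f a)) v)"
      then obtain u v where "a # w = u @ 2 # v" "u \<in> lists {0, 1}" by blast
      then have "a = 2 \<or> a \<in> {0, 1}" by (cases u) simp_all
      then show False using 3 by simp
    qed
    ultimately show ?thesis by blast
  qed
qed

lemma g_accepted_palindrome_delta:
  assumes "f ` {0, 1} \<subseteq> Units G" "inj_on (word_prod G f) (lists {0, 1})"
  shows "g_accepted G {0, 1, 2} (palindrome_delta G f) 0 {1} = marked_palindromes"
proof -
  have closed: "word_prod G f u \<otimes> word_prod G (\<lambda>a. inv (f a)) v \<in> carrier G"
    if "u \<in> lists {0, 1}" "v \<in> lists {0, 1}" for u v
    using that assms(1) by (auto intro!: m_closed word_prod_closed simp: image_subset_iff)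
  have accepted_iff: "w \<in> g_accepted G {0, 1, 2} (palindrome_delta G f) 0 {1} \<longleftrightarrow>
      (\<exists>u v. w = u @ 2 # v \<and> u \<in> lists {0, 1} \<and> v \<in> lists {0, 1} \<and>
         word_prod G f u \<otimes> word_prod G (\<lambda>a. inv (f a)) v = \<one>)" for w
  proof -
    have "w \<in> g_accepted G {0, 1, 2} (palindrome_delta G f) 0 {1} \<longleftrightarrow>
        w \<in> lists {0, 1, 2} \<and> gruns G (palindrome_delta G f) 0 \<one> w 1 \<one>"
      unfolding g_accepted_def by simp
    also have "\<dots> \<longleftrightarrow> (\<exists>u v. w = u @ 2 # v \<and> u \<in> lists {0, 1} \<and> v \<in> lists {0, 1} \<and>
         \<one> = \<one> \<otimes> (word_prod G f u \<otimes> word_prod G (\<lambda>a. inv (f a)) v))"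
      using palindrome_gruns_from_0[OF assms(1) one_closed] by (auto simp: subset_iff)
    also have "\<dots> \<longleftrightarrow> (\<exists>u v. w = u @ 2 # v \<and> u \<in> lists {0, 1} \<and> v \<in> lists {0, 1} \<and>
         word_prod G f u \<otimes> word_prod G (\<lambda>a. inv (f a)) v = \<one>)"
      using closed by (metis l_one)
    finally show ?thesis .
  qed
  have "(\<exists>u v. w = u @ 2 # v \<and> u \<in> lists {0, 1} \<and> v \<in> lists {0, 1} \<and>
         word_prod G f u \<otimes> word_prod G (\<lambda>a. inv (f a)) v = \<one>) \<longleftrightarrow>
      (\<exists>u. w = u @ 2 # rev u \<and> u \<in> lists {0, 1})" for w
  proof
    assume "\<exists>u v. w = u @ 2 # v \<and> u \<in> lists {0, 1} \<and> v \<in> lists {0, 1} \<and>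
         word_prod G f u \<otimes> word_prod G (\<lambda>a. inv (f a)) v = \<one>"
    then obtain u v where uv: "w = u @ 2 # v" "u \<in> lists {0, 1}" "v \<in> lists {0, 1}"
        "word_prod G f u \<otimes> word_prod G (\<lambda>a. inv (f a)) v = \<one>"
      by blast
    then have "u = rev v"
      using word_prod_mult_inv_eq_one_iff[OF assms] by blast
    with uv show "\<exists>u. w = u @ 2 # rev u \<and> u \<in> lists {0, 1}"
      by (intro exI[of _ u]) simp
  next
    assume "\<exists>u. w = u @ 2 # rev u \<and> u \<in> lists {0, 1}"
    then obtain u where u: "w = u @ 2 # rev u" "u \<in> lists {0, 1}"
      by blast
    moreover have rev_u: "rev u \<in> lists {0, 1}"
      using u(2) by (simp add: in_lists_conv_set)
    moreover have "word_prod G f u \<otimes> word_prod G (\<lambda>a. inv (f a)) (rev u) = \<one>"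
      using word_prod_mult_inv_eq_one_iff[OF assms u(2) rev_u] by simp
    ultimately show "\<exists>u v. w = u @ 2 # v \<and> u \<in> lists {0, 1} \<and> v \<in> lists {0, 1} \<and>
         word_prod G f u \<otimes> word_prod G (\<lambda>a. inv (f a)) v = \<one>"
      by blast
  qed
  then show ?thesis
    unfolding set_eq_iff accepted_iff marked_palindromes_def by blast
qed

end

lemma marked_palindromes_in_gLang:
  fixes f :: "nat \<Rightarrow> 'g"
  assumes "monoid G" "f ` {0, 1} \<subseteq> Units G" "inj_on (word_prod G f) (lists {0, 1})"
  shows "marked_palindromes \<in> gLang G {0, 1, 2}"
  unfolding gLang_def using monoid.g_automaton_palindrome_delta[OF assms(1,2)]
    monoid.g_accepted_palindrome_delta[OF assms, symmetric] by blast

section \<open>Positive rationals and SL(2,Q)\<close>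

lemma SL2Q_simps [simp]:
  "carrier SL2Q = {A. det A = 1}" "x \<otimes>\<^bsub>SL2Q\<^esub> y = x ** y" "\<one>\<^bsub>SL2Q\<^esub> = mat 1"
  by (simp_all add: SL2Q_def)

lemma Qpos_simps [simp]:
  "carrier Qpos = {q. 0 < q}" "x \<otimes>\<^bsub>Qpos\<^esub> y = x * y" "\<one>\<^bsub>Qpos\<^esub> = 1"
  by (simp_all add: Qpos_def)

lemma monoid_SL2Q: "monoid SL2Q"
  by (rule monoidI) (auto simp: det_mul matrix_mul_assoc)

lemma comm_monoid_Qpos: "comm_monoid Qpos"
  by (rule comm_monoidI) auto

definition mat2 :: "rat \<Rightarrow> rat \<Rightarrow> rat \<Rightarrow> rat \<Rightarrow> rat^2^2" where
  "mat2 a b c d = vector [vector [a, b], vector [c, d]]"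

lemma mat2_nth [simp]:
  "mat2 a b c d $ 1 $ 1 = a" "mat2 a b c d $ 1 $ 2 = b"
  "mat2 a b c d $ 2 $ 1 = c" "mat2 a b c d $ 2 $ 2 = d"
  by (simp_all add: mat2_def)

lemma mat2_cases: "\<exists>a b c d. M = mat2 a b c d"
  by (intro exI) (simp add: vec_eq_iff forall_2)

lemma mat2_eq_iff [simp]: "mat2 a b c d = mat2 a' b' c' d' \<longleftrightarrow> a = a' \<and> b = b' \<and> c = c' \<and> d = d'"
  by (auto simp: vec_eq_iff forall_2)

lemma mat2_mult [simp]:
  "mat2 a b c d ** mat2 a' b' c' d' =
     mat2 (a * a' + b * c') (a * b' + b * d') (c * a' + d * c') (c * b' + d * d')"
  by (simp add: vec_eq_iff forall_2 matrix_matrix_mult_def sum_2)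

lemma mat_1_eq_mat2: "mat 1 = mat2 1 0 0 1"
  by (simp add: vec_eq_iff forall_2 mat_def)

lemma det_mat2 [simp]: "det (mat2 a b c d) = a * d - b * c"
  by (simp add: det_2)

definition Qpos_diag :: "rat \<Rightarrow> rat^2^2" where
  "Qpos_diag m = mat2 m 0 0 (inverse m)"

lemma Qpos_diag_mon: "Qpos_diag \<in> mon Qpos SL2Q"
  unfolding mon_def hom_def Qpos_diag_def
  by (auto simp: inverse_mult_distrib inj_on_def)

lemma Qpos_diag_one: "Qpos_diag 1 = mat 1"
  by (simp add: Qpos_diag_def mat_1_eq_mat2)

lemma gLang_Qpos_subset_SL2Q: "gLang Qpos Sig \<subseteq> gLang SL2Q Sig"
  using gLang_subset_if_mon[OF comm_monoid.axioms(1)[OF comm_monoid_Qpos] Qpos_diag_mon]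
  by (simp add: Qpos_diag_one)

definition sl2_gen :: "nat \<Rightarrow> rat^2^2" where
  "sl2_gen a = (if a = 0 then mat2 1 1 0 1 else mat2 1 0 1 1)"

lemma sl2_gen_simps [simp]: "sl2_gen 0 = mat2 1 1 0 1" "a \<noteq> 0 \<Longrightarrow> sl2_gen a = mat2 1 0 1 1"
  by (simp_all add: sl2_gen_def)

lemma sl2_gen_Units: "sl2_gen ` {0, 1} \<subseteq> Units SL2Q"
proof -
  have "mat2 1 1 0 1 \<in> Units SL2Q"
    unfolding Units_def by (auto simp: mat_1_eq_mat2 intro!: exI[of _ "mat2 1 (-1) 0 1"])
  moreover have "mat2 1 0 1 1 \<in> Units SL2Q"
    unfolding Units_def by (auto simp: mat_1_eq_mat2 intro!: exI[of _ "mat2 1 0 (-1) 1"])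
  ultimately show ?thesis by simp
qed

definition nonneg_matrix :: "rat^2^2 \<Rightarrow> bool" where
  "nonneg_matrix M \<longleftrightarrow> (\<forall>i j. 0 \<le> M $ i $ j)"

lemma nonneg_matrix_mat2 [simp]:
  "nonneg_matrix (mat2 a b c d) \<longleftrightarrow> 0 \<le> a \<and> 0 \<le> b \<and> 0 \<le> c \<and> 0 \<le> d"
  by (simp add: nonneg_matrix_def forall_2)

lemma nonneg_word_prod_sl2_gen: "nonneg_matrix (word_prod SL2Q sl2_gen u)"
proof (induction u)
  case Nil
  then show ?case by (simp add: mat_1_eq_mat2)
next
  case (Cons a u)
  obtain p q r s where "word_prod SL2Q sl2_gen u = mat2 p q r s"
    using mat2_cases by blast
  with Cons show ?case by (cases "a = 0") simp_all
qed

lemma det_word_prod_sl2_gen: "det (word_prod SL2Q sl2_gen u) = 1"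
proof (induction u)
  case (Cons a u)
  then show ?case by (cases "a = 0") (simp_all add: det_mul)
qed simp

lemma sl2_gen_mult_neq_one:
  assumes "nonneg_matrix M"
  shows "sl2_gen a ** M \<noteq> mat 1"
proof -
  obtain p q r s where "M = mat2 p q r s"
    using mat2_cases by blast
  with assms show ?thesis by (cases "a = 0") (simp_all add: mat_1_eq_mat2)
qed

lemma sl2_gen_mult_neq:
  assumes "nonneg_matrix M" "nonneg_matrix N" "det M = 1"
  shows "sl2_gen 0 ** M \<noteq> sl2_gen 1 ** N"
proof -
  obtain p q r s where M: "M = mat2 p q r s"
    using mat2_cases by blast
  obtain p' q' r' s' where N: "N = mat2 p' q' r' s'"
    using mat2_cases by blast
  show ?thesis
  proof
    assume "sl2_gen 0 ** M = sl2_gen 1 ** N"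
    then have "p + r = p'" "q + s = q'" "r = p' + r'" "s = q' + s'"
      using M N by simp_all
    then have "p + r' = 0" "q + s' = 0"
      by linarith+
    then have "p = 0" "q = 0"
      using assms(1,2) M N by simp_all
    then show False
      using assms(3) M by simp
  qed
qed

lemma inj_on_word_prod_sl2_gen: "inj_on (word_prod SL2Q sl2_gen) (lists {0, 1})"
proof -
  interpret SL2Q: monoid SL2Q by (rule monoid_SL2Q)
  have "word_prod SL2Q sl2_gen u = word_prod SL2Q sl2_gen u' \<Longrightarrow> u \<in> lists {0, 1} \<Longrightarrow>
      u' \<in> lists {0, 1} \<Longrightarrow> u = u'" for u u'
  proof (induction u arbitrary: u')
    case Nil
    then show ?case
      using sl2_gen_mult_neq_one[OF nonneg_word_prod_sl2_gen] by (cases u') auto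
  next
    case (Cons a u)
    show ?case
    proof (cases u')
      case Nil
      then show ?thesis
        using Cons.prems sl2_gen_mult_neq_one[OF nonneg_word_prod_sl2_gen] by auto
    next
      case (Cons b v)
      show ?thesis
      proof (cases "a = b")
        case True
        have "sl2_gen a \<in> Units SL2Q" using Cons.prems(2) sl2_gen_Units by auto
        then have "word_prod SL2Q sl2_gen u = word_prod SL2Q sl2_gen v"
          using Cons.prems(1) \<open>u' = b # v\<close> True SL2Q.Units_l_cancel det_word_prod_sl2_gen by simp
        then show ?thesis using Cons.IH Cons.prems \<open>u' = b # v\<close> True by simp
      next
        case False
        have eq: "sl2_gen a ** word_prod SL2Q sl2_gen u = sl2_gen b ** word_prod SL2Q sl2_gen v"
          using Cons.prems(1) \<open>u' = b # v\<close> by simp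
        have neq: "sl2_gen 0 ** word_prod SL2Q sl2_gen x \<noteq> sl2_gen 1 ** word_prod SL2Q sl2_gen y"
          for x y
          by (rule sl2_gen_mult_neq[OF nonneg_word_prod_sl2_gen nonneg_word_prod_sl2_gen
                det_word_prod_sl2_gen])
        consider "a = 0" "b = 1" | "a = 1" "b = 0"
          using False Cons.prems(2,3) \<open>u' = b # v\<close> by auto
        then show ?thesis
        proof cases
          case 1
          then show ?thesis using eq neq[of u v] by simp
        next
          case 2
          then show ?thesis using eq neq[of v u] by simp
        qed
      qed
    qed
  qed
  then show ?thesis by (rule inj_onI)
qed

theorem theorem3p12:
  shows "(\<forall>Sig :: 'a set. finite Sig \<longrightarrow> gLang Qpos Sig \<subseteq> gLang SL2Q Sig) \<and>
         (\<exists>Sig :: nat set. finite Sig \<and> gLang Qpos Sig \<subset> gLang SL2Q Sig)"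
proof
  show "\<forall>Sig :: 'a set. finite Sig \<longrightarrow> gLang Qpos Sig \<subseteq> gLang SL2Q Sig"
    using gLang_Qpos_subset_SL2Q by blast
  have "marked_palindromes \<in> gLang SL2Q {0, 1, 2}"
    by (rule marked_palindromes_in_gLang[OF monoid_SL2Q sl2_gen_Units inj_on_word_prod_sl2_gen])
  moreover have "marked_palindromes \<notin> gLang Qpos {0, 1, 2}"
    by (rule marked_palindromes_notin_comm_gLang[OF comm_monoid_Qpos])
  ultimately have "gLang Qpos {0, 1, 2 :: nat} \<subset> gLang SL2Q {0, 1, 2}"
    using gLang_Qpos_subset_SL2Q by blast
  then show "\<exists>Sig :: nat set. finite Sig \<and> gLang Qpos Sig \<subset> gLang SL2Q Sig"
    by (intro exI[of _ "{0, 1, 2}"]) simp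
qed

end
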